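(* Let $q\in\{2,4\}$ and let $n,\kappa$ be integers with $1\le \kappa<n$. Let $A_{\kappa\text{-WMU},q,n}$ denote the maximum size of a $\kappa$-weakly mutually uncorrelated code $\mathcal{C}\subseteq \mathbb{F}_q^n$. Then \[ c_q\,\frac{q^{n}}{n-\kappa+1}\le A_{\kappa\text{-WMU},q,n}\le \frac{q^{n}}{n-\kappa+1},\qquad\text{where } c_q=\frac{(q-1)^2(2q-1)}{4q^4}. \]
   Context: $\mathbb{F}_q$ is the finite field with $q$ elements. For a sequence $\mathbf{a}=(a_1,\dots,a_n)$ write $\mathbf{a}_i^j=(a_i,\dots,a_j)$ for $i\le j$. A code $\mathcal{C}\subseteq\mathbb{F}_q^n$ is $\kappa$-weakly mutually uncorrelated ($\kappa$-WMU), for $1\le\kappa<n$, if for all (not necessarily distinct) $\mathbf{a},\mathbf{b}\in\mathcal{C}$ and all $l$ with $\kappa\le l<n$ one has $\mathbf{a}_1^{l}\neq \mathbf{b}_{n-l+1}^{n}$, i.e. no proper prefix of length at least $\kappa$ of a codeword equals a suffix of a codeword (including itself). *)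

theory Defs
  imports Complex_Main
begin

text \<open>Words of length n over the alphabet 'a (e.g. the finite field F_q) are lists of length n.
  For a = (a_1..a_n): the prefix a_1^l is take l a, the suffix a_{n-l+1}^n is drop (n - l) a.\<close>

definition words :: "nat \<Rightarrow> 'a list set" where
  "words n = {xs. length xs = n}"

definition kappa_WMU :: "nat \<Rightarrow> nat \<Rightarrow> 'a list set \<Rightarrow> bool" where
  "kappa_WMU \<kappa> n C \<longleftrightarrow> C \<subseteq> words n \<and>
     (\<forall>a\<in>C. \<forall>b\<in>C. \<forall>l. \<kappa> \<le> l \<and> l < n \<longrightarrow> take l a \<noteq> drop (n - l) b)"

definition A_WMU :: "'a itself \<Rightarrow> nat \<Rightarrow> nat \<Rightarrow> nat" where
  "A_WMU _ \<kappa> n = Max {card (C :: 'a list set) | C. kappa_WMU \<kappa> n C}"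

end

theory Submission
  imports Defs "HOL-Library.Cardinality"
begin

text \<open>Upper bound: two occurrences, at different offsets, of codewords of a \<kappa>-WMU
  code C \<subseteq> F_q^n inside one word cannot overlap in \<kappa> or more positions. Hence
  placing a codeword at any of the n - \<kappa> + 1 offsets of a window of length 2n - \<kappa> and
  filling the rest arbitrarily produces (n - \<kappa> + 1) |C| q^(n - \<kappa>) distinct words,
  at most q^(2n - \<kappa>).

  Lower bound: appending \<kappa> - 1 arbitrary letters to the codewords of a mutually
  uncorrelated (1-WMU) code of length m = n - \<kappa> + 1 gives a \<kappa>-WMU code of length n.
  The words 0^k y, where y begins and ends with a nonzero letter and has no run of k zeros,
  form a mutually uncorrelated code, because the run 0^k occurs in them only at the front.
  A union bound over the positions of a forbidden run counts at least
  (q - 1)^2 q^(m - k - 2) (1 - m / q^k) such y, and for the least k with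
  2qm \<le> (2q - 1) q^k this is at least c_q q^m / m.\<close>

lemma words_eq_lists: "words n = {xs. set xs \<subseteq> UNIV \<and> length xs = n}"
  by (auto simp: words_def)

lemma finite_words [simp]: "finite (words n :: 'a::finite list set)"
  unfolding words_eq_lists by (rule finite_lists_length_eq) simp

lemma card_words: "card (words n :: 'a::finite list set) = CARD('a) ^ n"
  unfolding words_eq_lists by (rule card_lists_length_eq) simp

lemma finite_WMU_sizes: "finite {card (C :: 'a::finite list set) | C. kappa_WMU \<kappa> n C}"
proof (rule finite_subset)
  show "{card C | C :: 'a list set. kappa_WMU \<kappa> n C} \<subseteq> card ` Pow (words n :: 'a list set)"
    by (auto simp: kappa_WMU_def)
qed simp

lemma card_le_A_WMU:
  fixes C :: "'a::finite list set" and F :: "'a itself"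
  assumes "kappa_WMU \<kappa> n C"
  shows "card C \<le> A_WMU F \<kappa> n"
  unfolding A_WMU_def using assms by (intro Max_ge finite_WMU_sizes) auto

lemma A_WMU_attained:
  fixes F :: "'a::finite itself"
  obtains C :: "'a list set" where "kappa_WMU \<kappa> n C" "A_WMU F \<kappa> n = card C"
proof -
  have "kappa_WMU \<kappa> n ({} :: 'a list set)" by (simp add: kappa_WMU_def)
  then have "A_WMU F \<kappa> n \<in> {card (C :: 'a list set) | C. kappa_WMU \<kappa> n C}"
    unfolding A_WMU_def by (intro Max_in finite_WMU_sizes) auto
  then show ?thesis using that by blast
qed

lemma kappa_WMU_occurrences_far_apart:
  assumes W: "kappa_WMU \<kappa> n C" and c: "c \<in> C" "c' \<in> C"
    and eq: "u @ c @ v = u' @ c' @ v'" and lt: "length u < length u'"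
  shows "n - \<kappa> < length u' - length u"
proof (rule ccontr)
  assume close: "\<not> n - \<kappa> < length u' - length u"
  define j where "j = length u' - length u"
  define w where "w = u @ c @ v"
  have len: "length c = n" "length c' = n"
    using W c by (auto simp: kappa_WMU_def words_def)
  have "c = take n (drop (length u) w)" using len by (simp add: w_def)
  moreover have "c' = take n (drop (length u') w)" using len eq by (simp add: w_def)
  ultimately have "drop j c = take (n - j) c'"
    using lt by (simp add: j_def drop_take add.commute)
  moreover have "\<kappa> \<le> n - j" "n - j < n" "n - (n - j) = j"
    using lt close by (auto simp: j_def)
  moreover have "take (n - j) c' \<noteq> drop (n - (n - j)) c"
    using W c \<open>\<kappa> \<le> n - j\<close> \<open>n - j < n\<close> unfolding kappa_WMU_def by blast
  ultimately show False by simp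
qed

lemma kappa_WMU_card_le:
  fixes C :: "'a::finite list set"
  assumes W: "kappa_WMU \<kappa> n C"
  shows "card C * (n - \<kappa> + 1) \<le> CARD('a) ^ n"
proof -
  define d where "d = n - \<kappa>"
  define S :: "(nat \<times> 'a list \<times> 'a list \<times> 'a list) set"
    where "S = Sigma {..d} (\<lambda>i. words i \<times> C \<times> words (d - i))"
  define f where "f = (\<lambda>(i::nat, u::'a list, c::'a list, v::'a list). u @ c @ v)"
  have C_words: "C \<subseteq> words n" using W by (simp add: kappa_WMU_def)
  then have fin_C: "finite C" using finite_subset finite_words by blast
  have "inj_on f S"
  proof (rule inj_onI)
    fix x y assume "x \<in> S" "y \<in> S" "f x = f y"
    then obtain i u c v i' u' c' v' where x: "x = (i, u, c, v)" and y: "y = (i', u', c', v')"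
      and mem: "c \<in> C" "c' \<in> C" and len: "length u = i" "length u' = i'" "i \<le> d" "i' \<le> d"
      and eq: "u @ c @ v = u' @ c' @ v'"
      unfolding S_def f_def words_def by (cases x, cases y) auto
    have "\<not> length u < length u'" "\<not> length u' < length u"
      using kappa_WMU_occurrences_far_apart[OF W mem eq]
        kappa_WMU_occurrences_far_apart[OF W mem(2,1) eq[symmetric]] len
      by (auto simp: d_def)
    then have "u = u'" "c @ v = c' @ v'" using eq by auto
    moreover have "length c = length c'" using C_words mem by (auto simp: words_def)
    ultimately show "x = y" using x y len by auto
  qed
  moreover have "f ` S \<subseteq> words (n + d)"
    using C_words by (auto simp: f_def S_def words_def)
  ultimately have "card S \<le> card (words (n + d) :: 'a list set)"
    by (intro card_inj_on_le) simp_all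
  then have "card S \<le> CARD('a) ^ n * CARD('a) ^ d"
    by (simp add: card_words power_add)
  moreover have "card S = (d + 1) * card C * CARD('a) ^ d"
  proof -
    have "card S = (\<Sum>i\<le>d. CARD('a) ^ i * (card C * CARD('a) ^ (d - i)))"
      unfolding S_def by (subst card_SigmaI) (auto simp: fin_C card_cartesian_product card_words)
    also have "\<dots> = (\<Sum>i\<le>d. card C * CARD('a) ^ d)"
      by (intro sum.cong refl) (simp add: algebra_simps flip: power_add)
    finally show ?thesis by (simp add: algebra_simps)
  qed
  ultimately have "card C * (d + 1) * CARD('a) ^ d \<le> CARD('a) ^ n * CARD('a) ^ d"
    by (simp add: ac_simps)
  then show ?thesis by (simp add: d_def)
qed

lemma kappa_WMU_append_words:
  assumes W: "kappa_WMU \<kappa> m D"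
  shows "kappa_WMU (\<kappa> + t) (m + t) ((\<lambda>(w, v). w @ v) ` (D \<times> words t))"
  unfolding kappa_WMU_def
proof (intro conjI ballI allI impI)
  have D_words: "D \<subseteq> words m" using W by (simp add: kappa_WMU_def)
  then show "(\<lambda>(w, v). w @ v) ` (D \<times> words t) \<subseteq> words (m + t)"
    by (auto simp: words_def)
  fix a b l
  assume "a \<in> (\<lambda>(w, v). w @ v) ` (D \<times> words t)" "b \<in> (\<lambda>(w, v). w @ v) ` (D \<times> words t)"
    and l: "\<kappa> + t \<le> l \<and> l < m + t"
  then obtain w v w' v' where a: "a = w @ v" "w \<in> D" and b: "b = w' @ v'" "w' \<in> D" "length v' = t"
    by (auto simp: words_def)
  have len: "length w = m" "length w' = m" using D_words a b by (auto simp: words_def)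
  define j where "j = l - t"
  have j: "\<kappa> \<le> j" "j < m" "m + t - l = m - j" using l by (auto simp: j_def)
  show "take l a \<noteq> drop (m + t - l) b"
  proof
    assume eq: "take l a = drop (m + t - l) b"
    have "take j w = take j (take l a)" using a len j by (simp add: j_def)
    also have "\<dots> = take j (drop (m - j) w' @ v')" using eq b len j by simp
    also have "\<dots> = drop (m - j) w'" using len j by simp
    finally show False using W a b j unfolding kappa_WMU_def by blast
  qed
qed

lemma card_append_words:
  fixes D :: "'a::finite list set"
  assumes "D \<subseteq> words m"
  shows "card ((\<lambda>(w, v). w @ v) ` (D \<times> words t)) = card D * CARD('a) ^ t"
proof -
  have "inj_on (\<lambda>(w, v). w @ v) (D \<times> words t)"
    using assms by (auto simp: inj_on_def words_def)
  then show ?thesis by (simp add: card_image card_cartesian_product card_words)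
qed

lemma card_lists_nth_in:
  fixes A :: "nat \<Rightarrow> 'a set"
  shows "card {xs. length xs = r \<and> (\<forall>i<r. xs ! i \<in> A i)} = (\<Prod>i<r. card (A i))"
proof (induction r arbitrary: A)
  case 0
  then show ?case by simp
next
  case (Suc r)
  have "{xs. length xs = Suc r \<and> (\<forall>i<Suc r. xs ! i \<in> A i)}
      = (\<lambda>(x, xs). x # xs) ` (A 0 \<times> {xs. length xs = r \<and> (\<forall>i<r. xs ! i \<in> A (Suc i))})"
    by (auto simp: length_Suc_conv All_less_Suc2 image_iff)
  moreover have "inj_on (\<lambda>(x, xs). x # xs) X" for X :: "('a \<times> 'a list) set"
    by (auto simp: inj_on_def)
  ultimately show ?case
    unfolding prod.lessThan_Suc_shift
    by (simp add: card_image card_cartesian_product Suc.IH)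
qed

definition pattern_words :: "nat \<Rightarrow> nat set \<Rightarrow> nat set \<Rightarrow> 'a::zero list set" where
  "pattern_words r E Z = {y. length y = r \<and> (\<forall>i\<in>E. y ! i \<noteq> 0) \<and> (\<forall>i\<in>Z. y ! i = 0)}"

lemma card_pattern_words:
  assumes "E \<subseteq> {..<r}" "Z \<subseteq> {..<r}" "E \<inter> Z = {}"
  shows "card (pattern_words r E Z :: 'a::{finite,zero} list set)
    = (CARD('a) - 1) ^ card E * CARD('a) ^ (r - card E - card Z)"
proof -
  define A :: "nat \<Rightarrow> 'a set" where
    "A i = (if i \<in> E then - {0} else if i \<in> Z then {0} else UNIV)" for i
  have card_A: "card (A i) = (if i \<in> E then CARD('a) - 1 else if i \<in> Z then 1 else CARD('a))" for i
    by (simp add: A_def Compl_eq_Diff_UNIV card_Diff_singleton)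
  have "pattern_words r E Z = {xs. length xs = r \<and> (\<forall>i<r. xs ! i \<in> A i)}"
    using assms by (auto simp: pattern_words_def A_def)
  then have "card (pattern_words r E Z :: 'a list set) = (\<Prod>i<r. card (A i))"
    by (simp add: card_lists_nth_in)
  also have "\<dots> = (CARD('a) - 1) ^ card E * CARD('a) ^ card ({..<r} - E - Z)"
    using assms unfolding card_A
    by (simp add: prod.If_cases Int_absorb2 Diff_eq inf_commute inf_left_commute)
  also have "card ({..<r} - E - Z) = r - card E - card Z"
  proof -
    have "{..<r} - E - Z = {..<r} - (E \<union> Z)" by blast
    then show ?thesis
      using assms by (simp add: card_Diff_subset card_Un_disjoint finite_subset)
  qed
  finally show ?thesis .
qed

definition no_zero_run :: "nat \<Rightarrow> 'a::zero list \<Rightarrow> bool" where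
  "no_zero_run k y \<longleftrightarrow> (\<forall>p. p + k \<le> length y \<longrightarrow> (\<exists>i<k. y ! (p + i) \<noteq> 0))"

definition run_free_tails :: "nat \<Rightarrow> nat \<Rightarrow> 'a::zero list set" where
  "run_free_tails k r = {y. length y = r \<and> y ! 0 \<noteq> 0 \<and> y ! (r - 1) \<noteq> 0 \<and> no_zero_run k y}"

lemma finite_pattern_words [simp]: "finite (pattern_words r E Z :: 'a::{finite,zero} list set)"
  by (rule finite_subset[OF _ finite_words[of r]]) (auto simp: pattern_words_def words_def)

lemma finite_run_free_tails [simp]: "finite (run_free_tails k r :: 'a::{finite,zero} list set)"
  by (rule finite_subset[OF _ finite_words[of r]]) (auto simp: run_free_tails_def words_def)

text \<open>Union bound: a word with nonzero ends that is not run free has a zero run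
  strictly inside, at one of the r - k - 1 inner positions.\<close>
lemma card_run_free_tails_ge:
  assumes k: "1 \<le> k" and r: "2 \<le> r"
  shows "(CARD('a) - 1) ^ 2 * CARD('a) ^ (r - 2)
    \<le> card (run_free_tails k r :: 'a::{finite,zero} list set)
      + (r - k - 1) * ((CARD('a) - 1) ^ 2 * CARD('a) ^ (r - 2 - k))"
proof -
  define Y :: "'a list set" where "Y = pattern_words r {0, r - 1} {}"
  define B :: "nat \<Rightarrow> 'a list set" where "B p = pattern_words r {0, r - 1} {p..<p + k}" for p
  have "Y \<subseteq> run_free_tails k r \<union> (\<Union>p\<in>{1..<r - k}. B p)"
  proof
    fix y assume "y \<in> Y"
    then have y: "length y = r" "y ! 0 \<noteq> 0" "y ! (r - 1) \<noteq> 0"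
      by (auto simp: Y_def pattern_words_def)
    show "y \<in> run_free_tails k r \<union> (\<Union>p\<in>{1..<r - k}. B p)"
    proof (cases "no_zero_run k y")
      case True
      then show ?thesis using y by (simp add: run_free_tails_def)
    next
      case False
      then obtain p where p: "p + k \<le> r" and zero: "\<forall>i<k. y ! (p + i) = 0"
        using y by (auto simp: no_zero_run_def)
      have "p \<noteq> 0" using zero[rule_format, of 0] y k by (cases p) auto
      moreover have "p + k \<noteq> r" using zero[rule_format, of "k - 1"] y k by auto
      moreover have "y ! i = 0" if "i \<in> {p..<p + k}" for i
        using zero[rule_format, of "i - p"] that by auto
      ultimately have "p \<in> {1..<r - k}" "y \<in> B p"
        using p y by (auto simp: B_def pattern_words_def)
      then show ?thesis by blast
    qed
  qed
  then have "card Y \<le> card (run_free_tails k r \<union> (\<Union>p\<in>{1..<r - k}. B p))"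
    by (intro card_mono) (simp_all add: B_def)
  also have "\<dots> \<le> card (run_free_tails k r :: 'a list set) + (\<Sum>p\<in>{1..<r - k}. card (B p))"
    using card_Un_le card_UN_le[of "{1..<r - k}" B] by (meson add_le_mono le_refl order_trans finite_atLeastLessThan)
  also have "(\<Sum>p\<in>{1..<r - k}. card (B p)) = (r - k - 1) * ((CARD('a) - 1) ^ 2 * CARD('a) ^ (r - 2 - k))"
  proof -
    have "card (B p) = (CARD('a) - 1) ^ 2 * CARD('a) ^ (r - 2 - k)" if "p \<in> {1..<r - k}" for p
      using that r unfolding B_def by (subst card_pattern_words) (auto simp: numeral_2_eq_2)
    then show ?thesis by simp
  qed
  also have "card Y = (CARD('a) - 1) ^ 2 * CARD('a) ^ (r - 2)"
    using r unfolding Y_def by (subst card_pattern_words) (auto simp: numeral_2_eq_2)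
  finally show ?thesis .
qed

definition zero_marker_code :: "nat \<Rightarrow> nat \<Rightarrow> 'a::zero list set" where
  "zero_marker_code k m = (\<lambda>y. replicate k 0 @ y) ` run_free_tails k (m - k)"

lemma zero_marker_code_subset_words: "k \<le> m \<Longrightarrow> zero_marker_code k m \<subseteq> words m"
  by (auto simp: zero_marker_code_def run_free_tails_def words_def)

lemma card_zero_marker_code:
  "card (zero_marker_code k m :: 'a::zero list set) = card (run_free_tails k (m - k) :: 'a list set)"
  unfolding zero_marker_code_def by (rule card_image) (simp add: inj_on_def)

lemma zero_marker_code_last:
  assumes "k < m" "b \<in> zero_marker_code k m"
  shows "b ! (m - 1) \<noteq> 0"
proof -
  obtain y where b: "b = replicate k 0 @ y" and y: "y \<in> run_free_tails k (m - k)"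
    using assms by (auto simp: zero_marker_code_def)
  have "m - 1 = k + (m - k - 1)" using assms(1) by simp
  then have "b ! (m - 1) = y ! (m - k - 1)" by (simp add: b nth_append)
  then show ?thesis using y by (simp add: run_free_tails_def)
qed

lemma zero_marker_code_zero_run:
  assumes "k < m" "b \<in> zero_marker_code k m"
    and p: "p + k \<le> m" and zero: "\<forall>i<k. b ! (p + i) = 0"
  shows "p = 0"
proof (rule ccontr)
  assume "p \<noteq> 0"
  obtain y where b: "b = replicate k 0 @ y" and y: "y \<in> run_free_tails k (m - k)"
    using assms by (auto simp: zero_marker_code_def)
  have b_nth: "b ! (k + i) = y ! i" for i by (simp add: b nth_append)
  show False
  proof (cases "k \<le> p")
    case True
    have "p - k + k \<le> length y" using y p True by (simp add: run_free_tails_def)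
    then obtain i where "i < k" "y ! (p - k + i) \<noteq> 0"
      using y by (auto simp: run_free_tails_def no_zero_run_def)
    moreover have "y ! (p - k + i) = b ! (p + i)" using b_nth[of "p - k + i"] True by simp
    ultimately show False using zero by simp
  next
    case False
    then have "y ! 0 = 0" using zero[rule_format, of "k - p"] b_nth[of 0] \<open>p \<noteq> 0\<close> by simp
    then show False using y by (simp add: run_free_tails_def)
  qed
qed

lemma zero_marker_code_MU:
  assumes "1 \<le> k" "k < m"
  shows "kappa_WMU 1 m (zero_marker_code k m :: 'a::zero list set)"
  unfolding kappa_WMU_def
proof (intro conjI ballI allI impI)
  show "zero_marker_code k m \<subseteq> words m"
    using assms by (simp add: zero_marker_code_subset_words)
  fix a b :: "'a list" and j
  assume a: "a \<in> zero_marker_code k m" and b: "b \<in> zero_marker_code k m" and j: "1 \<le> j \<and> j < m"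
  have len: "length a = m" "length b = m"
    using a b assms zero_marker_code_subset_words[of k m] by (auto simp: words_def)
  have a_zero: "a ! i = 0" if "i < k" for i
    using a that by (auto simp: zero_marker_code_def nth_append)
  show "take j a \<noteq> drop (m - j) b"
  proof
    assume eq: "take j a = drop (m - j) b"
    have shift: "a ! i = b ! (m - j + i)" if "i < j" for i
      using arg_cong[OF eq, of "\<lambda>xs. xs ! i"] that len j by simp
    show False
    proof (cases "j \<le> k")
      case True
      then have "j - 1 < k" using j by linarith
      then have "b ! (m - 1) = 0"
        using shift[of "j - 1"] a_zero[of "j - 1"] j by simp
      then show False using zero_marker_code_last assms b by blast
    next
      case False
      then have run: "\<forall>i<k. b ! (m - j + i) = 0" using shift a_zero by simp
      have "m - j + k \<le> m" using False j by linarith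
      then have "m - j = 0" using zero_marker_code_zero_run[OF assms(2) b _ run] by blast
      then show False using j by simp
    qed
  qed
qed

lemma card_run_free_tails_ge_real:
  fixes q :: nat
  defines "q \<equiv> CARD('a::{finite,zero})"
  assumes k: "1 \<le> k" and r: "2 \<le> r" "r \<le> m"
  shows "(real q - 1) ^ 2 * real q ^ (r - 2) * (real q ^ k - real m)
    \<le> real (card (run_free_tails k r :: 'a list set)) * real q ^ k"
proof -
  define N where "N = real (card (run_free_tails k r :: 'a list set))"
  define t where "t = real q ^ k"
  have q1: "1 \<le> q" unfolding q_def by (simp add: Suc_leI)
  have "real ((q - 1) ^ 2 * q ^ (r - 2)) \<le> real (card (run_free_tails k r :: 'a list set)
      + (r - k - 1) * ((q - 1) ^ 2 * q ^ (r - 2 - k)))"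
    unfolding of_nat_le_iff q_def by (rule card_run_free_tails_ge[OF k r(1)])
  then have count: "(real q - 1) ^ 2 * real q ^ (r - 2)
      \<le> N + real (r - k - 1) * ((real q - 1) ^ 2 * real q ^ (r - 2 - k))"
    unfolding N_def by (simp only: of_nat_add of_nat_mult of_nat_power of_nat_diff[OF q1] of_nat_1)
  have "(r - k - 1) * q ^ (r - 2 - k) * q ^ k \<le> m * q ^ (r - 2)"
  proof (cases "r - k - 1 = 0")
    case False
    then have "q ^ (r - 2 - k) * q ^ k = q ^ (r - 2)" by (simp flip: power_add)
    then have "(r - k - 1) * q ^ (r - 2 - k) * q ^ k = (r - k - 1) * q ^ (r - 2)"
      by (simp add: mult.assoc)
    also have "\<dots> \<le> m * q ^ (r - 2)" using r(2) by (intro mult_right_mono) simp_all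
    finally show ?thesis .
  qed simp
  then have overlap: "real (r - k - 1) * real q ^ (r - 2 - k) * t \<le> real m * real q ^ (r - 2)"
    unfolding t_def by (metis of_nat_le_iff of_nat_mult of_nat_power)
  have "(real q - 1) ^ 2 * real q ^ (r - 2) * t
      \<le> N * t + (real q - 1) ^ 2 * (real (r - k - 1) * real q ^ (r - 2 - k) * t)"
    using mult_right_mono[OF count, of t] by (simp add: t_def algebra_simps)
  also have "\<dots> \<le> N * t + (real q - 1) ^ 2 * (real m * real q ^ (r - 2))"
    using overlap by (intro add_left_mono mult_left_mono) simp_all
  finally show ?thesis by (simp add: N_def t_def algebra_simps)
qed

lemma card_zero_marker_code_ge:
  fixes q :: nat
  defines "q \<equiv> CARD('a::{finite,zero})"
  assumes k: "1 \<le> k" "k + 2 \<le> m"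
  shows "(real q - 1) ^ 2 * real q ^ m * (real q ^ k - real m)
    \<le> real (card (zero_marker_code k m :: 'a list set)) * real q ^ 2 * (real q ^ k) ^ 2"
proof -
  define r where "r = m - k"
  have r: "2 \<le> r" "r \<le> m" using k by (simp_all add: r_def)
  have power: "real q ^ (r - 2) * (real q ^ 2 * real q ^ k) = real q ^ m"
  proof -
    have "r - 2 + 2 + k = m" using k by (simp add: r_def)
    then show ?thesis by (metis power_add mult.assoc)
  qed
  have "(real q - 1) ^ 2 * real q ^ m * (real q ^ k - real m)
      = (real q - 1) ^ 2 * real q ^ (r - 2) * (real q ^ k - real m) * (real q ^ 2 * real q ^ k)"
    by (simp flip: power add: mult_ac)
  also have "\<dots> \<le> real (card (run_free_tails k r :: 'a list set)) * real q ^ k * (real q ^ 2 * real q ^ k)"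
    using card_run_free_tails_ge_real[OF k(1) r, where 'a = 'a] unfolding q_def
    by (rule mult_right_mono) simp
  finally show ?thesis
    by (simp add: card_zero_marker_code r_def power2_eq_square mult_ac)
qed

definition wmu_constant :: "nat \<Rightarrow> real" where
  "wmu_constant q = (real q - 1) ^ 2 * (2 * real q - 1) / (4 * real q ^ 4)"

lemma quadratic_le_on_window:
  fixes Q m t :: real
  assumes "2 * Q * m \<le> (2 * Q - 1) * t" "t \<le> 2 * Q * m"
  shows "(2 * Q - 1) * t ^ 2 \<le> 4 * Q ^ 2 * m * (t - m)"
proof -
  have "0 \<le> ((2 * Q - 1) * t - 2 * Q * m) * (2 * Q * m - t)"
    using assms by simp
  then show ?thesis by (simp add: algebra_simps power2_eq_square)
qed

text \<open>On the window 2qm \<le> (2q - 1) t, t \<le> 2qm the function (t - m) / t^2 is at least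
  (2q - 1) / (4 q^2 m); here t = q^k.\<close>
lemma card_zero_marker_code_ge_wmu_constant:
  fixes q :: nat
  defines "q \<equiv> CARD('a::{finite,zero})"
  assumes k: "1 \<le> k" "k + 2 \<le> m"
    and lo: "2 * q * m \<le> (2 * q - 1) * q ^ k" and hi: "q ^ k \<le> 2 * q * m"
  shows "wmu_constant q * (real q ^ m / real m) \<le> real (card (zero_marker_code k m :: 'a list set))"
proof -
  define Q t N where "Q = real q" and "t = real q ^ k"
    and "N = real (card (zero_marker_code k m :: 'a list set))"
  have q: "1 \<le> q" unfolding q_def by (simp add: Suc_leI)
  then have Q: "1 \<le> Q" "0 < t" "0 < real m" using k by (simp_all add: Q_def t_def)
  have "real (2 * q * m) \<le> real ((2 * q - 1) * q ^ k)" "real (q ^ k) \<le> real (2 * q * m)"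
    using lo hi by (simp_all only: of_nat_le_iff)
  then have "2 * Q * m \<le> (2 * Q - 1) * t" "t \<le> 2 * Q * m"
    using q by (simp_all add: Q_def t_def)
  then have window: "(2 * Q - 1) * t ^ 2 \<le> 4 * Q ^ 2 * m * (t - m)"
    by (rule quadratic_le_on_window)
  define K where "K = (Q - 1) ^ 2 * Q ^ m / (4 * Q ^ 4 * m * t ^ 2)"
  have "K \<ge> 0" using Q by (simp add: K_def)
  have "wmu_constant q * (Q ^ m / m) = K * ((2 * Q - 1) * t ^ 2)"
    using Q by (simp add: wmu_constant_def K_def Q_def field_simps)
  also have "\<dots> \<le> K * (4 * Q ^ 2 * m * (t - m))"
    using window \<open>K \<ge> 0\<close> by (rule mult_left_mono)
  also have "\<dots> = (Q - 1) ^ 2 * Q ^ m * (t - m) / (Q ^ 2 * t ^ 2)"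
    using Q by (simp add: K_def field_simps power2_eq_square eval_nat_numeral)
  also have "\<dots> \<le> N"
    using card_zero_marker_code_ge[OF k, where 'a = 'a] Q
    by (simp add: Q_def t_def N_def q_def pos_divide_le_eq mult.assoc)
  finally show ?thesis by (simp add: Q_def N_def)
qed

lemma exists_threshold_exponent:
  fixes q m :: nat
  assumes q: "2 \<le> q" and m: "2 \<le> m"
  obtains k where "1 \<le> k" "(2 * q - 1) * q ^ (k - 1) < 2 * q * m"
    "2 * q * m \<le> (2 * q - 1) * q ^ k" "q ^ k \<le> 2 * q * m"
proof -
  have "2 * q * m < 2 ^ (2 * q * m)" by (rule less_exp)
  also have "\<dots> \<le> q ^ (2 * q * m)" using q by (simp add: power_mono)
  also have "\<dots> \<le> (2 * q - 1) * q ^ (2 * q * m)" using q by simp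
  finally have "\<exists>k. 2 * q * m \<le> (2 * q - 1) * q ^ k" by (meson less_imp_le)
  then have "\<exists>k. 2 * q * m \<le> (2 * q - 1) * q ^ k
      \<and> (\<forall>k'<k. \<not> 2 * q * m \<le> (2 * q - 1) * q ^ k')"
    by (rule exists_least_iff[THEN iffD1])
  then obtain k where lo: "2 * q * m \<le> (2 * q - 1) * q ^ k"
    and least: "\<And>k'. k' < k \<Longrightarrow> \<not> 2 * q * m \<le> (2 * q - 1) * q ^ k'"
    by blast
  have "k \<noteq> 0"
  proof
    assume "k = 0"
    then have "2 * q * m \<le> 2 * q - 1" using lo by simp
    moreover have "2 * q * 1 \<le> 2 * q * m" using m by (intro mult_le_mono2) simp
    ultimately show False using q by linarith
  qed
  then have k: "1 \<le> k" and prev: "(2 * q - 1) * q ^ (k - 1) < 2 * q * m"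
    using least[of "k - 1"] by auto
  have "(2 * q - 1) * q ^ k = q * ((2 * q - 1) * q ^ (k - 1))"
    using k by (simp add: power_eq_if)
  also have "\<dots> < q * (2 * q * m)" using prev q by simp
  also have "\<dots> \<le> (2 * q - 1) * (2 * q * m)" using q by (intro mult_right_mono) simp_all
  finally have "q ^ k \<le> 2 * q * m" by simp
  with k prev lo show ?thesis by (rule that)
qed

lemma exponential_dominates_linear:
  fixes q m\<^sub>0 m :: nat
  assumes q: "2 \<le> q" and m\<^sub>0: "2 \<le> m\<^sub>0" "2 * q * m\<^sub>0 \<le> (2 * q - 1) * q ^ (m\<^sub>0 - 2)"
    and "m\<^sub>0 \<le> m"
  shows "2 * q * m \<le> (2 * q - 1) * q ^ (m - 2)"
  using \<open>m\<^sub>0 \<le> m\<close>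
proof (induction m rule: dec_induct)
  case base
  then show ?case using m\<^sub>0 by simp
next
  case (step n)
  define a where "a = (2 * q - 1) * q ^ (n - 2)"
  have IH: "2 * q * n \<le> a" using step.IH by (simp add: a_def)
  have "2 * q * 1 \<le> 2 * q * n" using step.hyps m\<^sub>0 by (intro mult_le_mono2) simp
  moreover have "1 * a \<le> (q - 1) * a" using q by (intro mult_le_mono1) simp
  ultimately have "2 * q \<le> (q - 1) * a" using IH by linarith
  then have "2 * q * Suc n \<le> a + (q - 1) * a" using IH by simp
  also have "\<dots> = q * a" using q by (simp add: algebra_simps)
  also have "\<dots> = (2 * q - 1) * q ^ (Suc n - 2)"
  proof -
    have "Suc n - 2 = Suc (n - 2)" using step.hyps m\<^sub>0 by simp
    then show ?thesis by (simp add: a_def)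
  qed
  finally show ?case .
qed

text \<open>This is the only place where q \<in> {2, 4} is needed: when the marker 0^k does not fit
  into a codeword of length m, the bound c_q q^m / m is at most one codeword.\<close>
lemma wmu_constant_short_length:
  assumes q: "q \<in> {2, 4}" and m: "2 \<le> m" and short: "(2 * q - 1) * q ^ (m - 2) < 2 * q * m"
  shows "wmu_constant q * (real q ^ m / real m) \<le> 1"
proof (cases "q = 2")
  case True
  have "m < 5"
    using exponential_dominates_linear[of q 5 m] short True by (cases "5 \<le> m") auto
  then have "(2::real) ^ m \<le> 2 ^ 4" by (intro power_increasing) auto
  then have "real q ^ m \<le> 2 ^ 4" using True by simp
  then have "real q ^ m / real m \<le> 2 ^ 4 / 2" using m by (intro frac_le) auto
  then show ?thesis using True by (simp add: wmu_constant_def)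
next
  case False
  then have "q = 4" using q by simp
  moreover have "m < 3"
    using exponential_dominates_linear[of q 3 m] short \<open>q = 4\<close> by (cases "3 \<le> m") auto
  ultimately have "m = 2" using m by simp
  with \<open>q = 4\<close> show ?thesis by (simp add: wmu_constant_def)
qed

lemma exists_MU_code:
  fixes m :: nat
  assumes q: "CARD('a::{finite,zero_neq_one}) \<in> {2, 4}" and m: "2 \<le> m"
  obtains D :: "'a::{finite,zero_neq_one} list set"
  where "kappa_WMU 1 m D" "wmu_constant CARD('a) * (real CARD('a) ^ m / real m) \<le> real (card D)"
proof -
  have q2: "2 \<le> CARD('a)" using q by auto
  obtain k where k: "1 \<le> k" and prev: "(2 * CARD('a) - 1) * CARD('a) ^ (k - 1) < 2 * CARD('a) * m"
    and lo: "2 * CARD('a) * m \<le> (2 * CARD('a) - 1) * CARD('a) ^ k" and hi: "CARD('a) ^ k \<le> 2 * CARD('a) * m"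
    using exists_threshold_exponent[OF q2 m] by blast
  show ?thesis
  proof (cases "k + 2 \<le> m")
    case True
    show ?thesis
      using zero_marker_code_MU[of k m] card_zero_marker_code_ge_wmu_constant[OF k True lo hi] k True
      by (intro that) simp_all
  next
    case False
    have "(2 * CARD('a) - 1) * CARD('a) ^ (m - 2) \<le> (2 * CARD('a) - 1) * CARD('a) ^ (k - 1)"
      using False q2 by (intro mult_left_mono power_increasing) simp_all
    then have "(2 * CARD('a) - 1) * CARD('a) ^ (m - 2) < 2 * CARD('a) * m"
      using prev by (rule le_less_trans)
    then have "wmu_constant CARD('a) * (real CARD('a) ^ m / real m) \<le> 1"
      by (rule wmu_constant_short_length[OF q m])
    moreover have "1 \<le> real (card (zero_marker_code 1 m :: 'a list set))"
    proof -
      have "replicate (m - 1) 1 \<in> (run_free_tails 1 (m - 1) :: 'a list set)"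
        using m by (auto simp: run_free_tails_def no_zero_run_def)
      then have "card (run_free_tails 1 (m - 1) :: 'a list set) \<noteq> 0" by auto
      then show ?thesis by (simp add: card_zero_marker_code Suc_le_eq card_gt_0_iff)
    qed
    ultimately have "wmu_constant CARD('a) * (real CARD('a) ^ m / real m)
        \<le> real (card (zero_marker_code 1 m :: 'a list set))"
      by linarith
    with zero_marker_code_MU[of 1 m] m show ?thesis by (intro that) simp_all
  qed
qed

lemma exists_WMU_code:
  fixes \<kappa> n :: nat
  assumes q: "CARD('a::{finite,zero_neq_one}) \<in> {2, 4}" and \<kappa>: "1 \<le> \<kappa>" "\<kappa> < n"
  obtains E :: "'a::{finite,zero_neq_one} list set"
  where "kappa_WMU \<kappa> n E"
    "wmu_constant CARD('a) * (real CARD('a) ^ n / real (n - \<kappa> + 1)) \<le> real (card E)"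
proof -
  define m where "m = n - \<kappa> + 1"
  have m: "2 \<le> m" and n: "n = m + (\<kappa> - 1)" using \<kappa> by (simp_all add: m_def)
  obtain D :: "'a list set" where D: "kappa_WMU 1 m D"
    "wmu_constant CARD('a) * (real CARD('a) ^ m / real m) \<le> real (card D)"
    using exists_MU_code[OF q m] by blast
  define E where "E = (\<lambda>(w, v). w @ v) ` (D \<times> words (\<kappa> - 1))"
  have "kappa_WMU \<kappa> n E"
    using kappa_WMU_append_words[OF D(1), of "\<kappa> - 1"] \<kappa> n by (simp add: E_def)
  have "D \<subseteq> words m" using D(1) by (simp add: kappa_WMU_def)
  then have card_E: "card E = card D * CARD('a) ^ (\<kappa> - 1)"
    by (simp add: E_def card_append_words)
  have "wmu_constant CARD('a) * (real CARD('a) ^ n / real m)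
      = wmu_constant CARD('a) * (real CARD('a) ^ m / real m) * real CARD('a) ^ (\<kappa> - 1)"
    by (simp add: n power_add)
  also have "\<dots> \<le> real (card D) * real CARD('a) ^ (\<kappa> - 1)"
    using D(2) by (rule mult_right_mono) simp
  also have "\<dots> = real (card E)" by (simp add: card_E)
  finally show ?thesis
    using that[OF \<open>kappa_WMU \<kappa> n E\<close>] by (simp add: m_def)
qed

theorem theorem3:
  fixes q n \<kappa> :: nat
    and F :: "'a::{finite,field} itself"
  assumes "card (UNIV :: 'a set) = q"
    and "q \<in> {2, 4}"
    and "1 \<le> \<kappa>" and "\<kappa> < n"
  shows "((real q - 1)^2 * (2 * real q - 1) / (4 * real q ^ 4)) * (real q ^ n / real (n - \<kappa> + 1))
           \<le> real (A_WMU F \<kappa> n)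
       \<and> real (A_WMU F \<kappa> n) \<le> real q ^ n / real (n - \<kappa> + 1)"
proof -
  obtain C :: "'a list set" where C: "kappa_WMU \<kappa> n C" "A_WMU F \<kappa> n = card C"
    by (rule A_WMU_attained)
  have "real (card C * (n - \<kappa> + 1)) \<le> real (q ^ n)"
    using kappa_WMU_card_le[OF C(1)] assms(1) by (simp only: of_nat_le_iff)
  then have upper: "real (A_WMU F \<kappa> n) \<le> real q ^ n / real (n - \<kappa> + 1)"
    using C(2) by (simp add: field_simps)
  obtain E :: "'a list set" where E: "kappa_WMU \<kappa> n E"
    "wmu_constant q * (real q ^ n / real (n - \<kappa> + 1)) \<le> real (card E)"
    using exists_WMU_code[of \<kappa> n] assms by blast
  have "real (card E) \<le> real (A_WMU F \<kappa> n)"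
    using card_le_A_WMU[OF E(1)] by simp
  with E(2) upper show ?thesis by (simp add: wmu_constant_def)
qed

end
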